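(* Let $n\ge1$ and let $A$ be a linear Nakayama algebra with $n+1$ simple modules whose Dyck path is $\mathcal D$. Then the number of isomorphism classes of indecomposable injective $A$-modules of projective dimension one is: (1) $n$, if $\mathcal D=u^nd^n$; (2) $d_1-1+\sum_{i=2}^{\ell-1}\max\{d_i-k_i-1,0\}+a_\ell-1$, if $\mathcal D=u^{a_1}d^{d_1}\cdots u^{a_\ell}d^{d_\ell}$ with $\ell\ge2$ and all $a_i,d_i\ge1$.
   Context: $K$ is a field; a linear Nakayama algebra with $n+1$ simple modules is a connected algebra $KQ/I$ with $Q$ the quiver $0\to1\to\cdots\to n$ and $I$ admissible; modules are finite-dimensional right modules; $e_iA$ is uniserial with composition factors $S_i,\dots,S_{i+c_i-1}$ (top to socle), $c_i=\dim_K e_iA$. The Dyck path of $A$ is the lattice path with steps $u=(1,1)$, $d=(1,-1)$ from $(0,0)$ to $(2n,0)$ whose vertex with first coordinate $x$ has height $h(x)=\max\{k-1: 0\le i\le n,\ 1\le k\le c_i,\ 2i+k-1=2n-x\}$ (the top boundary of the Auslander–Reiten quiver). For $\mathcal D=u^{a_1}d^{d_1}\cdots u^{a_\ell}d^{d_\ell}$ define $k_1=1$ and $k_i=k_{i-1}+a_{i-1}-d_{i-1}$ for $2\le i\le\ell$ (the level, i.e. height plus one, of the $(i-1)$-st valley). *)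

theory Defs
  imports Main
begin

text \<open>A linear Nakayama algebra A = KQ/I with n+1 simples (Q = 0 -> 1 -> ... -> n, I admissible,
  A connected) is determined up to isomorphism by its Kupisch series c_i = dim e_i A.\<close>
definition linear_nakayama :: "nat \<Rightarrow> (nat \<Rightarrow> nat) \<Rightarrow> bool" where
  "linear_nakayama n c \<longleftrightarrow> c n = 1 \<and> (\<forall>i<n. 2 \<le> c i \<and> c i \<le> c (Suc i) + 1)"

text \<open>Indecomposable modules (up to isomorphism) are the uniserial modules M(i,l) with top S_i
  and composition factors S_i, ..., S_(i+l-1), where i <= n and 1 <= l <= c_i.\<close>
definition indec :: "nat \<Rightarrow> (nat \<Rightarrow> nat) \<Rightarrow> nat \<times> nat \<Rightarrow> bool" where
  "indec n c M \<longleftrightarrow> fst M \<le> n \<and> 1 \<le> snd M \<and> snd M \<le> c (fst M)"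

definition is_projective :: "(nat \<Rightarrow> nat) \<Rightarrow> nat \<times> nat \<Rightarrow> bool" where
  "is_projective c M \<longleftrightarrow> snd M = c (fst M)"

text \<open>M(i,l) is injective iff it is not properly contained in M(i-1,l+1).\<close>
definition is_injective :: "(nat \<Rightarrow> nat) \<Rightarrow> nat \<times> nat \<Rightarrow> bool" where
  "is_injective c M \<longleftrightarrow> \<not> (0 < fst M \<and> snd M + 1 \<le> c (fst M - 1))"

text \<open>Syzygy: kernel of the projective cover e_i A -> M(i,l), namely M(i+l, c_i - l).\<close>
definition syzygy :: "(nat \<Rightarrow> nat) \<Rightarrow> nat \<times> nat \<Rightarrow> nat \<times> nat" where
  "syzygy c M = (fst M + snd M, c (fst M) - snd M)"

fun pd_le :: "(nat \<Rightarrow> nat) \<Rightarrow> nat \<Rightarrow> nat \<times> nat \<Rightarrow> bool" where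
  "pd_le c 0 M = is_projective c M"
| "pd_le c (Suc k) M = (is_projective c M \<or> pd_le c k (syzygy c M))"

definition pd_eq :: "(nat \<Rightarrow> nat) \<Rightarrow> nat \<Rightarrow> nat \<times> nat \<Rightarrow> bool" where
  "pd_eq c k M \<longleftrightarrow> pd_le c k M \<and> (\<forall>j<k. \<not> pd_le c j M)"

definition num_inj_pd1 :: "nat \<Rightarrow> (nat \<Rightarrow> nat) \<Rightarrow> nat" where
  "num_inj_pd1 n c = card {M. indec n c M \<and> is_injective c M \<and> pd_eq c 1 M}"

text \<open>Dyck path: height of the vertex with first coordinate x.\<close>
definition height :: "nat \<Rightarrow> (nat \<Rightarrow> nat) \<Rightarrow> nat \<Rightarrow> nat" where
  "height n c x = Max {k - 1 | i k. i \<le> n \<and> 1 \<le> k \<and> k \<le> c i \<and> 2*i + k - 1 = 2*n - x}"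

datatype step = U | D

definition dyck_path :: "nat \<Rightarrow> (nat \<Rightarrow> nat) \<Rightarrow> step list" where
  "dyck_path n c = map (\<lambda>x. if height n c x < height n c (Suc x) then U else D) [0..<2*n]"

definition dyck_word :: "nat list \<Rightarrow> nat list \<Rightarrow> step list" where
  "dyck_word as ds = concat (map (\<lambda>j. replicate (as!j) U @ replicate (ds!j) D) [0..<length as])"

text \<open>k_(j+1) in 0-based indexing: kval as ds 0 = k_1 = 1, kval (j+1) = kval j + a_(j+1) - d_(j+1).\<close>
fun kval :: "nat list \<Rightarrow> nat list \<Rightarrow> nat \<Rightarrow> int" where
  "kval as ds 0 = 1"
| "kval as ds (Suc j) = kval as ds j + int (as!j) - int (ds!j)"

end

(*
  The projective e_i A occupies the points (2n - 2i - k + 1, k - 1), 1 <= k <= c_i, of the top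
  boundary of the Auslander-Reiten quiver, so the Dyck path of A has its up steps exactly at the
  positions 2n - 2j - c_j (j < n), and these decrease with j. Reading the r-th up step of the
  word u^a_1 d^d_1 ... u^a_l d^d_l against this description shows that the Kupisch series is
  affine on blocks of vertices: writing A_q = a_1 + ... + a_q and D_q = d_1 + ... + d_q, one has
  c_i + i + D_(q-1) = n + 1 for n - A_q <= i < n - A_(q-1).

  M(i,l) is injective of projective dimension one iff l < c_i, c_(i-1) <= l (when i > 0), and
  its syzygy M(i+l, c_i - l) is projective. Injectivity forces i to be the first vertex
  n - A_q of a block; projectivity of the syzygy bounds l above by a_q - 1 (by a_1 in the first
  block, where the syzygy may be the simple S_n), and injectivity bounds it below by
  c_(i-1) = A_q + 2 - D_q. Counting the admissible lengths block by block gives the formula,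
  and case (1) is the case of a single block.
*)
theory Submission
  imports Defs
begin

lemma linear_nakayama_le_add_diff:
  assumes "linear_nakayama n c" and "i \<le> j" and "j \<le> n"
  shows "c i \<le> c j + (j - i)"
  using assms(2,3)
proof (induction j rule: dec_induct)
  case base
  then show ?case by simp
next
  case (step j)
  then have "c j \<le> c (Suc j) + 1"
    using assms(1) unfolding linear_nakayama_def by simp
  with step show ?case by simp
qed

lemma linear_nakayama_add_le:
  assumes "linear_nakayama n c" and "i \<le> n"
  shows "c i + i \<le> n + 1"
  using linear_nakayama_le_add_diff[OF assms(1,2) order_refl] assms
  unfolding linear_nakayama_def by simp

lemma linear_nakayama_ge_2:
  assumes "linear_nakayama n c" and "i < n"
  shows "2 \<le> c i"
  using assms unfolding linear_nakayama_def by simp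

lemma linear_nakayama_last:
  assumes "linear_nakayama n c"
  shows "c n = 1"
  using assms unfolding linear_nakayama_def by simp

section \<open>The up steps of the Dyck path\<close>

text \<open>The height of the Dyck path at x is attained by the first projective reaching the
  antidiagonal through x.\<close>
definition top_index :: "nat \<Rightarrow> (nat \<Rightarrow> nat) \<Rightarrow> nat \<Rightarrow> nat" where
  "top_index n c x = (LEAST i. 2*n - 2*i < x + c i)"

lemma
  assumes "linear_nakayama n c" and "x \<le> 2*n"
  shows top_index_le: "top_index n c x \<le> n"
    and top_index_reaches: "2*n - 2 * top_index n c x < x + c (top_index n c x)"
    and not_reaches_below_top_index: "i < top_index n c x \<Longrightarrow> x + c i \<le> 2*n - 2*i"
    and double_top_index_le: "2 * top_index n c x \<le> 2*n - x"
proof -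
  have reaches_n: "2*n - 2*n < x + c n"
    using linear_nakayama_last[OF assms(1)] by simp
  show le: "top_index n c x \<le> n"
    unfolding top_index_def by (rule Least_le) (fact reaches_n)
  show "2*n - 2 * top_index n c x < x + c (top_index n c x)"
    unfolding top_index_def by (rule LeastI) (fact reaches_n)
  show below: "x + c i \<le> 2*n - 2*i" if "i < top_index n c x" for i
    using not_less_Least[OF that[unfolded top_index_def]] by simp
  show "2 * top_index n c x \<le> 2*n - x"
  proof (cases "top_index n c x")
    case (Suc i)
    then have "x + c i \<le> 2*n - 2*i" using below by simp
    moreover have "2 \<le> c i" using linear_nakayama_ge_2[OF assms(1)] le Suc by simp
    ultimately show ?thesis using Suc le by linarith
  qed simp
qed

lemma height_eq:
  assumes "linear_nakayama n c" and "x \<le> 2*n"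
  shows "height n c x = 2*n - x - 2 * top_index n c x"
proof -
  let ?m = "top_index n c x"
  let ?T = "{k - 1 | i k. i \<le> n \<and> 1 \<le> k \<and> k \<le> c i \<and> 2*i + k - 1 = 2*n - x}"
  have "finite ?T"
    by (rule finite_subset[of _ "{..2*n}"]) auto
  moreover have "h \<le> 2*n - x - 2 * ?m" if "h \<in> ?T" for h
  proof -
    obtain i k where ik: "h = k - 1" "i \<le> n" "1 \<le> k" "k \<le> c i" "2*i + k - 1 = 2*n - x"
      using \<open>h \<in> ?T\<close> by blast
    then have "\<not> i < ?m"
      using not_reaches_below_top_index[OF assms, of i] by linarith
    with ik show ?thesis by linarith
  qed
  moreover have "2*n - x - 2 * ?m \<in> ?T"
  proof -
    let ?k = "2*n - x - 2 * ?m + 1"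
    have "?m \<le> n" "2*n - 2 * ?m < x + c ?m" "2 * ?m \<le> 2*n - x"
      using top_index_le[OF assms] top_index_reaches[OF assms] double_top_index_le[OF assms]
      by simp_all
    then have "2*n - x - 2 * ?m = ?k - 1" "?m \<le> n" "1 \<le> ?k" "?k \<le> c ?m"
      "2 * ?m + ?k - 1 = 2*n - x"
      using assms(2) by linarith+
    then show ?thesis by blast
  qed
  ultimately show ?thesis
    unfolding height_def by (rule Max_eqI)
qed

definition up_position :: "nat \<Rightarrow> (nat \<Rightarrow> nat) \<Rightarrow> nat \<Rightarrow> nat" where
  "up_position n c j = 2*n - 2*j - c j"

lemma
  assumes "linear_nakayama n c" and "j < n"
  shows up_position_add: "up_position n c j + c j = 2*n - 2*j"
    and up_position_less: "up_position n c j < 2*n"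
  using linear_nakayama_add_le[OF assms(1), of j] linear_nakayama_ge_2[OF assms] assms(2)
  unfolding up_position_def by linarith+

lemma up_position_strict_antimono:
  assumes "linear_nakayama n c" and "j < j'" and "j' < n"
  shows "up_position n c j' < up_position n c j"
  using linear_nakayama_le_add_diff[OF assms(1), of j j'] up_position_add[OF assms(1), of j]
    up_position_add[OF assms(1), of j'] assms
  by linarith

lemma inj_on_up_position:
  assumes "linear_nakayama n c"
  shows "inj_on (up_position n c) {..<n}"
  by (rule inj_onI) (metis lessThan_iff linorder_neqE_nat less_irrefl
      up_position_strict_antimono[OF assms])

lemma length_dyck_path [simp]: "length (dyck_path n c) = 2*n"
  unfolding dyck_path_def by simp

lemma top_index_Suc_less_iff:
  assumes "linear_nakayama n c" and "x < 2*n"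
  shows "top_index n c (Suc x) < top_index n c x \<longleftrightarrow> (\<exists>j<n. 2*n - 2*j = x + c j)"
proof -
  let ?m0 = "top_index n c x" and ?m1 = "top_index n c (Suc x)"
  have x: "x \<le> 2*n" "Suc x \<le> 2*n" using assms(2) by simp_all
  show ?thesis
  proof
    assume less: "?m1 < ?m0"
    then have "x + c ?m1 \<le> 2*n - 2 * ?m1"
      using not_reaches_below_top_index[OF assms(1) x(1)] by blast
    moreover have "2*n - 2 * ?m1 < Suc x + c ?m1"
      using top_index_reaches[OF assms(1) x(2)] .
    moreover have "?m1 < n" using less top_index_le[OF assms(1) x(1)] by linarith
    ultimately show "\<exists>j<n. 2*n - 2*j = x + c j" by (intro exI[of _ ?m1]) auto
  next
    assume "\<exists>j<n. 2*n - 2*j = x + c j"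
    then obtain j where j: "j < n" "2*n - 2*j = x + c j" by blast
    have "?m1 \<le> j"
      unfolding top_index_def[of n c "Suc x"] by (rule Least_le) (use j in linarith)
    moreover have "j < ?m0"
    proof (rule ccontr)
      assume "\<not> j < ?m0"
      then have "c ?m0 \<le> c j + (j - ?m0)"
        using linear_nakayama_le_add_diff[OF assms(1)] j(1) by simp
      then show False using top_index_reaches[OF assms(1) x(1)] j \<open>\<not> j < ?m0\<close> by linarith
    qed
    ultimately show "?m1 < ?m0" by linarith
  qed
qed

lemma dyck_path_nth_eq_U_iff:
  assumes "linear_nakayama n c" and "x < 2*n"
  shows "dyck_path n c ! x = U \<longleftrightarrow> x \<in> up_position n c ` {..<n}"
proof -
  let ?m0 = "top_index n c x" and ?m1 = "top_index n c (Suc x)"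
  have x: "x \<le> 2*n" "Suc x \<le> 2*n" using assms(2) by simp_all
  have "?m1 \<le> ?m0"
    unfolding top_index_def[of n c "Suc x"]
    by (rule Least_le) (use top_index_reaches[OF assms(1) x(1)] in linarith)
  then have "dyck_path n c ! x = U \<longleftrightarrow> ?m1 < ?m0"
    using height_eq[OF assms(1) x(1)] height_eq[OF assms(1) x(2)] assms(2)
      double_top_index_le[OF assms(1) x(1)] double_top_index_le[OF assms(1) x(2)]
    unfolding dyck_path_def by auto
  also have "\<dots> \<longleftrightarrow> (\<exists>j<n. x = up_position n c j)"
    unfolding top_index_Suc_less_iff[OF assms]
    using up_position_add[OF assms(1)] by (metis add_right_cancel)
  finally show ?thesis by blast
qed

lemma count_list_take_eq_card:
  "count_list (take p xs) y = card {i. i < p \<and> i < length xs \<and> xs ! i = y}"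
proof -
  have "{i. i < length (take p xs) \<and> y = take p xs ! i} = {i. i < p \<and> i < length xs \<and> xs ! i = y}"
    by auto
  then show ?thesis
    by (simp add: count_list_eq_length_filter length_filter_conv_card)
qed

lemma count_U_take_dyck_path:
  assumes "linear_nakayama n c"
  shows "count_list (take p (dyck_path n c)) U = card {j. j < n \<and> up_position n c j < p}"
proof -
  have "{x. x < p \<and> x < length (dyck_path n c) \<and> dyck_path n c ! x = U}
      = up_position n c ` {j. j < n \<and> up_position n c j < p}" (is "?X = ?Y")
  proof (intro subset_antisym subsetI)
    fix x assume "x \<in> ?X"
    then show "x \<in> ?Y" using dyck_path_nth_eq_U_iff[OF assms, of x] by auto
  next
    fix x assume "x \<in> ?Y"
    then obtain j where "j < n" "x = up_position n c j" "x < p" by blast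
    then show "x \<in> ?X"
      using dyck_path_nth_eq_U_iff[OF assms, of x] up_position_less[OF assms, of j] by auto
  qed
  moreover have "inj_on (up_position n c) {j. j < n \<and> up_position n c j < p}"
    by (rule inj_on_subset[OF inj_on_up_position[OF assms]]) auto
  ultimately show ?thesis
    by (simp add: count_list_take_eq_card card_image)
qed

lemma count_U_dyck_path:
  assumes "linear_nakayama n c"
  shows "count_list (dyck_path n c) U = n"
proof -
  have "{j. j < n \<and> up_position n c j < 2*n} = {..<n}"
    using up_position_less[OF assms] by auto
  then show ?thesis
    using count_U_take_dyck_path[OF assms, of "2*n"] by simp
qed

lemma count_U_before_up_position:
  assumes "linear_nakayama n c" and "j < n"
  shows "count_list (take (up_position n c j) (dyck_path n c)) U = n - 1 - j"
proof -
  have "{j'. j' < n \<and> up_position n c j' < up_position n c j} = {Suc j..<n}"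
  proof (intro subset_antisym subsetI)
    fix j' assume j': "j' \<in> {j'. j' < n \<and> up_position n c j' < up_position n c j}"
    have "\<not> j' \<le> j"
    proof
      assume "j' \<le> j"
      then show False
        using j' up_position_strict_antimono[OF assms(1), of j' j] assms(2)
        by (cases "j' = j") auto
    qed
    with j' show "j' \<in> {Suc j..<n}" by simp
  qed (use up_position_strict_antimono[OF assms(1)] in auto)
  then show ?thesis
    using count_U_take_dyck_path[OF assms(1)] by simp
qed

section \<open>Dyck words\<close>

definition prefix_sum :: "nat list \<Rightarrow> nat \<Rightarrow> nat" where
  "prefix_sum xs q = (\<Sum>t<q. xs ! t)"

lemma prefix_sum_0 [simp]: "prefix_sum xs 0 = 0"
  by (simp add: prefix_sum_def)

lemma prefix_sum_Suc [simp]: "prefix_sum xs (Suc q) = prefix_sum xs q + xs ! q"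
  by (simp add: prefix_sum_def)

lemma prefix_sum_mono: "q \<le> q' \<Longrightarrow> prefix_sum xs q \<le> prefix_sum xs q'"
  by (induction q' rule: dec_induct) auto

lemma prefix_sum_strict_mono:
  assumes "\<forall>j<length xs. 0 < xs ! j" and "q < q'" and "q' \<le> length xs"
  shows "prefix_sum xs q < prefix_sum xs q'"
proof -
  have "prefix_sum xs q < prefix_sum xs (Suc q)"
    using assms by simp
  also have "\<dots> \<le> prefix_sum xs q'"
    using assms(2) by (intro prefix_sum_mono) simp
  finally show ?thesis .
qed

lemma kval_eq: "kval as ds j = 1 + int (prefix_sum as j) - int (prefix_sum ds j)"
  by (induction j) simp_all

lemma count_list_replicate [simp]:
  "count_list (replicate m x) y = (if x = y then m else 0)"
  by (induction m) auto

definition dyck_block :: "nat list \<Rightarrow> nat list \<Rightarrow> nat \<Rightarrow> step list" where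
  "dyck_block as ds j = replicate (as ! j) U @ replicate (ds ! j) D"

lemma length_dyck_blocks:
  "length (concat (map (dyck_block as ds) [0..<q])) = prefix_sum as q + prefix_sum ds q"
  by (induction q) (simp_all add: dyck_block_def)

lemma count_U_dyck_blocks:
  "count_list (concat (map (dyck_block as ds) [0..<q])) U = prefix_sum as q"
  by (induction q) (simp_all add: dyck_block_def)

lemma dyck_word_eq_blocks: "dyck_word as ds = concat (map (dyck_block as ds) [0..<length as])"
  unfolding dyck_word_def dyck_block_def ..

lemma count_U_dyck_word: "count_list (dyck_word as ds) U = prefix_sum as (length as)"
  unfolding dyck_word_eq_blocks by (rule count_U_dyck_blocks)

lemma dyck_word_split:
  assumes "q < length as"
  shows "dyck_word as ds = concat (map (dyck_block as ds) [0..<q])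
      @ replicate (as ! q) U @ replicate (ds ! q) D
      @ concat (map (dyck_block as ds) [Suc q..<length as])"
proof -
  have "[0..<length as] = [0..<q] @ q # [Suc q..<length as]"
    using upt_add_eq_append[of 0 q "length as - q"] upt_conv_Cons[OF assms] assms by simp
  then show ?thesis
    unfolding dyck_word_eq_blocks by (simp add: dyck_block_def)
qed

lemma
  fixes as ds :: "nat list"
  assumes "q < length as" and "t < as ! q"
  defines "p \<equiv> prefix_sum as q + prefix_sum ds q + t"
  shows less_length_dyck_word: "p < length (dyck_word as ds)"
    and dyck_word_nth_up_run: "dyck_word as ds ! p = U"
    and count_U_take_dyck_word: "count_list (take p (dyck_word as ds)) U = prefix_sum as q + t"
  using assms length_dyck_blocks[of as ds q]
  by (simp_all add: dyck_word_split[OF assms(1), of ds] nth_append count_U_dyck_blocks)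

section \<open>Injective modules of projective dimension one\<close>

definition inj_pd1 :: "nat \<Rightarrow> (nat \<Rightarrow> nat) \<Rightarrow> (nat \<times> nat) set" where
  "inj_pd1 n c = {M. indec n c M \<and> is_injective c M \<and> pd_eq c 1 M}"

lemma num_inj_pd1_eq_card: "num_inj_pd1 n c = card (inj_pd1 n c)"
  unfolding num_inj_pd1_def inj_pd1_def ..

lemma mem_inj_pd1_iff:
  "(i, l) \<in> inj_pd1 n c \<longleftrightarrow>
    i \<le> n \<and> 1 \<le> l \<and> l < c i \<and> (i = 0 \<or> c (i - 1) \<le> l) \<and> c i - l = c (i + l)"
  unfolding inj_pd1_def indec_def is_injective_def pd_eq_def
  by (auto simp: is_projective_def syzygy_def)

locale kupisch_dyck_word =
  fixes n :: nat and c :: "nat \<Rightarrow> nat" and as ds :: "nat list"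
  assumes kupisch: "linear_nakayama n c"
    and length_ds: "length ds = length as"
    and as_nonempty: "as \<noteq> []"
    and as_pos: "\<forall>j<length as. 0 < as ! j"
    and ds_pos: "\<forall>j<length as. 0 < ds ! j"
    and dyck_path_eq: "dyck_path n c = dyck_word as ds"
begin

text \<open>Runs are numbered from 0: \<open>as ! q\<close> and \<open>ds ! q\<close> are the paper's
  a_(q+1) and d_(q+1), and \<open>ups q\<close>, \<open>downs q\<close> count the steps before run q.\<close>

abbreviation "peaks \<equiv> length as"
abbreviation "ups \<equiv> prefix_sum as"
abbreviation "downs \<equiv> prefix_sum ds"

lemma n_eq_ups: "n = ups peaks"
  using count_U_dyck_path[OF kupisch] count_U_dyck_word[of as ds] dyck_path_eq by simp

lemma ups_le_n: "q \<le> peaks \<Longrightarrow> ups q \<le> n"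
  using prefix_sum_mono n_eq_ups by metis

lemma ups_strict_mono: "q < q' \<Longrightarrow> q' \<le> peaks \<Longrightarrow> ups q < ups q'"
  using prefix_sum_strict_mono as_pos by blast

lemma downs_strict_mono: "q < q' \<Longrightarrow> q' \<le> peaks \<Longrightarrow> downs q < downs q'"
  using prefix_sum_strict_mono ds_pos length_ds by metis

definition block :: "nat \<Rightarrow> nat set" where
  "block q = {n - ups (Suc q) ..< n - ups q}"

lemma kupisch_on_block:
  assumes q: "q < peaks" and i: "i \<in> block q"
  shows "c i + i + downs q = n + 1"
proof -
  define t where "t = n - 1 - i - ups q"
  have ups_Suc: "ups (Suc q) \<le> n" by (rule ups_le_n) (use q in simp)
  with i have t: "t < as ! q" and i_eq: "i = n - 1 - (ups q + t)"
    unfolding block_def t_def by auto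
  define p where "p = ups q + downs q + t"
  \<comment> \<open>the up step at p is the (ups q + t)-th one in both descriptions of the path\<close>
  have "p < 2*n" "dyck_path n c ! p = U"
    using less_length_dyck_word[OF q t, of ds] dyck_word_nth_up_run[OF q t, of ds]
    unfolding p_def dyck_path_eq[symmetric] by simp_all
  then obtain j where j: "j < n" "p = up_position n c j"
    using dyck_path_nth_eq_U_iff[OF kupisch] by blast
  have "n - 1 - j = ups q + t"
    using count_U_before_up_position[OF kupisch j(1)] count_U_take_dyck_word[OF q t, of ds]
    unfolding j(2)[symmetric] p_def dyck_path_eq by simp
  then have "j = i" using i_eq j(1) by simp
  then have "p + c i = 2*n - 2*i"
    using up_position_add[OF kupisch j(1)] j(2) by simp
  then show ?thesis
    using i_eq t ups_Suc unfolding p_def by simp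
qed

lemma block_start_in_block: "q < peaks \<Longrightarrow> n - ups (Suc q) \<in> block q"
  using ups_strict_mono[of q "Suc q"] ups_le_n[of "Suc q"] unfolding block_def by simp

lemma kupisch_at_block_start:
  assumes "q < peaks"
  shows "c (n - ups (Suc q)) = ups (Suc q) + 1 - downs q"
  using kupisch_on_block[OF assms block_start_in_block[OF assms]] ups_le_n[of "Suc q"] assms
  by simp

lemma block_exists:
  assumes "i < n"
  shows "\<exists>q<peaks. i \<in> block q"
proof -
  have "n - 1 - i < ups peaks" "\<not> n - 1 - i < ups 0"
    using assms n_eq_ups by simp_all
  then obtain q where "q < peaks" "\<not> n - 1 - i < ups q" "n - 1 - i < ups (Suc q)"
    using ex_least_nat_less[of "\<lambda>q. n - 1 - i < ups q"] by blast
  then show ?thesis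
    using assms ups_le_n[of "Suc q"] unfolding block_def by auto
qed

lemma downs_le_ups:
  assumes q: "q < peaks"
  shows "downs q \<le> ups q"
proof -
  have "ups q < ups (Suc q)" by (rule ups_strict_mono) (use q in simp_all)
  moreover have "ups (Suc q) \<le> n" by (rule ups_le_n) (use q in simp)
  ultimately have "n - 1 - ups q \<in> block q" "n - 1 - ups q < n"
    unfolding block_def by auto
  then show ?thesis
    using kupisch_on_block[OF q] linear_nakayama_ge_2[OF kupisch] by fastforce
qed

lemma inj_pd1_vertex_eq_block_start:
  assumes M: "(i, l) \<in> inj_pd1 n c" and q: "q < peaks" and i: "i \<in> block q"
  shows "i = n - ups (Suc q)"
proof (rule ccontr)
  assume "i \<noteq> n - ups (Suc q)"
  with i have "0 < i" and i': "i - 1 \<in> block q" unfolding block_def by auto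
  then have "c (i - 1) = c i + 1"
    using kupisch_on_block[OF q i] kupisch_on_block[OF q i'] by linarith
  moreover have "c (i - 1) \<le> l" "l < c i"
    using M \<open>0 < i\<close> unfolding mem_inj_pd1_iff by auto
  ultimately show False by simp
qed

lemma injective_at_block_start_iff:
  assumes q: "q < peaks"
  shows "(n - ups (Suc q) = 0 \<or> c (n - ups (Suc q) - 1) \<le> l)
    \<longleftrightarrow> (Suc q < peaks \<longrightarrow> ups (Suc q) + 2 - downs (Suc q) \<le> l)"
proof (cases "Suc q < peaks")
  case True
  have "ups (Suc q) < n"
    using ups_strict_mono[of "Suc q" peaks] True n_eq_ups by simp
  moreover have "n - ups (Suc (Suc q)) \<le> n - ups (Suc q) - 1"
    using ups_strict_mono[of "Suc q" "Suc (Suc q)"] True by simp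
  ultimately have "n - ups (Suc q) - 1 \<in> block (Suc q)"
    unfolding block_def by simp
  then have "c (n - ups (Suc q) - 1) = ups (Suc q) + 2 - downs (Suc q)"
    using kupisch_on_block[OF True] \<open>ups (Suc q) < n\<close> by fastforce
  with True \<open>ups (Suc q) < n\<close> show ?thesis by simp
next
  case False
  then have "Suc q = peaks" using q by simp
  then show ?thesis using n_eq_ups by simp
qed

lemma syzygy_projective_below_n_iff:
  assumes q: "q < peaks" and l: "l < c (n - ups (Suc q))" and below_n: "n - ups (Suc q) + l < n"
  defines "i \<equiv> n - ups (Suc q)"
  shows "c i - l = c (i + l) \<longleftrightarrow> l < as ! q"
proof -
  have ci: "c i + i + downs q = n + 1"
    using kupisch_on_block[OF q block_start_in_block[OF q]] unfolding i_def .
  have ups_Suc: "ups (Suc q) = ups q + as ! q" "ups (Suc q) \<le> n"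
    using ups_le_n[of "Suc q"] q by simp_all
  show ?thesis
  proof
    assume syz: "c i - l = c (i + l)"
    obtain q' where q': "q' < peaks" "i + l \<in> block q'"
      using block_exists below_n unfolding i_def by blast
    then have "downs q' = downs q"
      using kupisch_on_block[OF q'] ci l syz unfolding i_def by simp
    then have "q' = q"
      using downs_strict_mono[of q q'] downs_strict_mono[of q' q] q q'(1)
      by (cases q q' rule: linorder_cases) auto
    then show "l < as ! q"
      using q'(2) ups_Suc unfolding block_def i_def by auto
  next
    assume "l < as ! q"
    then have "i + l \<in> block q"
      using ups_Suc unfolding block_def i_def by auto
    then show "c i - l = c (i + l)"
      using kupisch_on_block[OF q] ci by fastforce
  qed
qed

lemma syzygy_projective_at_block_start_iff:
  assumes q: "q < peaks" and l: "l < c (n - ups (Suc q))"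
  defines "i \<equiv> n - ups (Suc q)"
  shows "c i - l = c (i + l) \<longleftrightarrow> l < as ! q \<or> (q = 0 \<and> l = as ! q)"
proof -
  have ups_Suc: "ups (Suc q) = ups q + as ! q" "ups (Suc q) \<le> n"
    using ups_le_n[of "Suc q"] q by simp_all
  have "i + l \<le> n"
    using linear_nakayama_add_le[OF kupisch, of i] l unfolding i_def by simp
  then consider (simple) "i + l = n" | (below_n) "i + l < n" by linarith
  then show ?thesis
  proof cases
    case simple
    have "downs q = 0 \<longleftrightarrow> q = 0"
      using downs_strict_mono[of 0 q] q by (cases q) auto
    moreover have "l = ups (Suc q)"
      using simple ups_Suc unfolding i_def by simp
    ultimately show ?thesis
      using simple kupisch_at_block_start[OF q] linear_nakayama_last[OF kupisch]
      unfolding i_def by auto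
  next
    case below_n
    then have "\<not> (q = 0 \<and> l = as ! q)"
      using ups_Suc unfolding i_def by auto
    with below_n show ?thesis
      using syzygy_projective_below_n_iff[OF q l] unfolding i_def by blast
  qed
qed

text \<open>For q = 0 the length \<open>as ! 0\<close> is admissible as well: its syzygy is the simple
  projective S_n.\<close>
definition pd1_lengths :: "nat \<Rightarrow> nat set" where
  "pd1_lengths q =
    {(if Suc q < peaks then ups (Suc q) + 2 - downs (Suc q) else 1) ..
     (if q = 0 then as ! 0 else as ! q - 1)}"

lemma block_start_mem_inj_pd1_iff:
  assumes q: "q < peaks"
  shows "(n - ups (Suc q), l) \<in> inj_pd1 n c \<longleftrightarrow> l \<in> pd1_lengths q"
proof -
  let ?i = "n - ups (Suc q)"
  have a: "0 < as ! q" using as_pos q by simp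
  have ci: "c ?i = ups q + as ! q + 1 - downs q" "downs q \<le> ups q"
    using kupisch_at_block_start[OF q] downs_le_ups[OF q] by simp_all
  have lower: "1 \<le> l \<and> (?i = 0 \<or> c (?i - 1) \<le> l)
      \<longleftrightarrow> (if Suc q < peaks then ups (Suc q) + 2 - downs (Suc q) else 1) \<le> l"
    using injective_at_block_start_iff[OF q, of l] downs_le_ups[of "Suc q"] by auto
  have upper: "l < c ?i \<and> c ?i - l = c (?i + l)
      \<longleftrightarrow> l \<le> (if q = 0 then as ! 0 else as ! q - 1)"
    using syzygy_projective_at_block_start_iff[OF q, of l] ci a by auto
  show ?thesis
    unfolding mem_inj_pd1_iff pd1_lengths_def using lower upper by auto
qed

lemma inj_pd1_eq_blocks:
  "inj_pd1 n c = (\<lambda>(q, l). (n - ups (Suc q), l)) ` (SIGMA q:{..<peaks}. pd1_lengths q)"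
proof (intro subset_antisym subsetI)
  fix M assume "M \<in> inj_pd1 n c"
  moreover obtain i l where M_eq: "M = (i, l)" by fastforce
  ultimately have M: "(i, l) \<in> inj_pd1 n c" by simp
  then have "i \<le> n" "l < c i" "1 \<le> l"
    unfolding mem_inj_pd1_iff by simp_all
  then have "i < n"
    using linear_nakayama_last[OF kupisch] by (cases "i = n") auto
  then obtain q where q: "q < peaks" "i \<in> block q"
    using block_exists by blast
  then have "i = n - ups (Suc q)"
    using inj_pd1_vertex_eq_block_start[OF M] by simp
  with q M M_eq block_start_mem_inj_pd1_iff show
    "M \<in> (\<lambda>(q, l). (n - ups (Suc q), l)) ` (SIGMA q:{..<peaks}. pd1_lengths q)"
    by force
qed (use block_start_mem_inj_pd1_iff in auto)

lemma card_inj_pd1: "card (inj_pd1 n c) = (\<Sum>q<peaks. card (pd1_lengths q))"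
proof -
  have "inj_on (\<lambda>q. n - ups (Suc q)) {..<peaks}"
  proof (rule inj_onI)
    fix q q'
    assume "q \<in> {..<peaks}" "q' \<in> {..<peaks}" "n - ups (Suc q) = n - ups (Suc q')"
    then show "q = q'"
      using ups_le_n[of "Suc q"] ups_le_n[of "Suc q'"]
        ups_strict_mono[of "Suc q" "Suc q'"] ups_strict_mono[of "Suc q'" "Suc q"]
      by (cases q q' rule: linorder_cases) auto
  qed
  then have "inj_on (\<lambda>(q, l). (n - ups (Suc q), l)) (SIGMA q:{..<peaks}. pd1_lengths q)"
    unfolding inj_on_def by auto
  then have "card (inj_pd1 n c) = card (SIGMA q:{..<peaks}. pd1_lengths q)"
    unfolding inj_pd1_eq_blocks by (rule card_image)
  also have "\<dots> = (\<Sum>q<peaks. card (pd1_lengths q))"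
    by (rule card_SigmaI) (simp_all add: pd1_lengths_def)
  finally show ?thesis .
qed

lemma card_pd1_lengths_single: "peaks = 1 \<Longrightarrow> card (pd1_lengths 0) = as ! 0"
  unfolding pd1_lengths_def by simp

lemma card_pd1_lengths_first:
  assumes "2 \<le> peaks"
  shows "card (pd1_lengths 0) = ds ! 0 - 1"
  using downs_le_ups[of 1] ds_pos assms unfolding pd1_lengths_def by auto

lemma card_pd1_lengths_inner:
  assumes "0 < q" and "Suc q < peaks"
  shows "int (card (pd1_lengths q)) = max (int (ds ! q) - kval as ds q - 1) 0"
  using downs_le_ups[of "Suc q"] assms unfolding pd1_lengths_def kval_eq by auto

lemma card_pd1_lengths_last:
  assumes "2 \<le> peaks"
  shows "card (pd1_lengths (peaks - 1)) = as ! (peaks - 1) - 1"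
  using assms unfolding pd1_lengths_def by simp

lemma num_inj_pd1_single_peak: "peaks = 1 \<Longrightarrow> num_inj_pd1 n c = n"
  using card_pd1_lengths_single n_eq_ups unfolding num_inj_pd1_eq_card card_inj_pd1 by simp

lemma num_inj_pd1_several_peaks:
  assumes "2 \<le> peaks"
  shows "int (num_inj_pd1 n c) = int (ds ! 0) - 1
      + (\<Sum>j\<in>{1..peaks - 2}. max (int (ds ! j) - kval as ds j - 1) 0)
      + int (as ! (peaks - 1)) - 1"
proof -
  have "{..<peaks} = insert 0 (insert (peaks - 1) {1..peaks - 2})"
    "peaks - 1 \<notin> {1..peaks - 2}"
    using assms by auto
  then have "(\<Sum>q<peaks. int (card (pd1_lengths q))) = int (card (pd1_lengths 0))
      + (int (card (pd1_lengths (peaks - 1))) + (\<Sum>q\<in>{1..peaks - 2}. int (card (pd1_lengths q))))"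
    using assms by simp
  also have "(\<Sum>q\<in>{1..peaks - 2}. int (card (pd1_lengths q)))
      = (\<Sum>j\<in>{1..peaks - 2}. max (int (ds ! j) - kval as ds j - 1) 0)"
    using card_pd1_lengths_inner assms by (intro sum.cong) auto
  moreover have "0 < ds ! 0" "0 < as ! (peaks - 1)"
    using ds_pos as_pos as_nonempty by simp_all
  ultimately show ?thesis
    using card_pd1_lengths_first[OF assms] card_pd1_lengths_last[OF assms]
    unfolding num_inj_pd1_eq_card card_inj_pd1 by (simp add: of_nat_diff)
qed

end

theorem mainTheorem10:
  fixes n :: nat and c :: "nat \<Rightarrow> nat"
  assumes "1 \<le> n" and "linear_nakayama n c"
  shows "(dyck_path n c = replicate n U @ replicate n D \<longrightarrow> num_inj_pd1 n c = n)
    \<and> (\<forall>as ds. length as = length ds \<and> 2 \<le> length as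
          \<and> (\<forall>j<length as. 1 \<le> as!j \<and> 1 \<le> ds!j)
          \<and> dyck_path n c = dyck_word as ds \<longrightarrow>
        int (num_inj_pd1 n c) =
          int (ds!0) - 1
          + (\<Sum>j\<in>{1..length as - 2}. max (int (ds!j) - kval as ds j - 1) 0)
          + int (as!(length as - 1)) - 1)"
proof (intro conjI impI allI)
  assume "dyck_path n c = replicate n U @ replicate n D"
  moreover have "dyck_word [n] [n] = replicate n U @ replicate n D"
    by (simp add: dyck_word_def)
  ultimately interpret kupisch_dyck_word n c "[n]" "[n]"
    using assms by unfold_locales auto
  show "num_inj_pd1 n c = n"
    using num_inj_pd1_single_peak by simp
next
  fix as ds :: "nat list"
  assume path: "length as = length ds \<and> 2 \<le> length as \<and> (\<forall>j<length as. 1 \<le> as!j \<and> 1 \<le> ds!j)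
    \<and> dyck_path n c = dyck_word as ds"
  then interpret kupisch_dyck_word n c as ds
    using assms(2) by unfold_locales auto
  show "int (num_inj_pd1 n c) =
      int (ds!0) - 1
      + (\<Sum>j\<in>{1..length as - 2}. max (int (ds!j) - kval as ds j - 1) 0)
      + int (as!(length as - 1)) - 1"
    using num_inj_pd1_several_peaks path by simp
qed

end
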